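(* For every annotated CQ $(q,E)$ with $E=(E^+,E^-)$, the $\preceq^{\mathrm{cod}}$-generalizations for $(q,E)$ are precisely the $\preceq^{\mathrm{cod}}$-repairs for $(q,E')$, where $E'=(E^+\cup\{e_q\},E^-)$.
   Context: Data examples are pairs $(I,\mathbf a)$ with $I$ a finite instance and $\mathbf a$ a $k$-tuple of its values. A $k$-ary CQ is $q(x_1,\dots,x_k)\text{ :- }\alpha_1,\dots,\alpha_n$ (relational atoms, no constants, each answer variable in some atom). Its canonical example $e_q$ is $(I_q,(x_1,\dots,x_k))$ with $I_q$ the set of atoms of $q$ viewed as facts. $[\![q]\!]$ is the set of data examples $(I,\mathbf a)$ with $\mathbf a\in q(I)$; $\subseteq$ is query containment; $q$ fits $E$ iff $E^+\subseteq[\![q]\!]$ and $E^-\cap[\![q]\!]=\emptyset$. $q_1\preceq^{\mathrm{cod}}_q q_2$ iff $[\![q]\!]\oplus[\![q_1]\!]\subseteq[\![q]\!]\oplus[\![q_2]\!]$ ($\oplus$ symmetric difference), $\prec_q$ its strict part. A $\preceq^{\mathrm{cod}}$-repair for $(q,E)$ is a CQ $q'$ fitting $E$ such that no CQ $q''$ fitting $E$ has $q''\prec^{\mathrm{cod}}_q q'$. A $\preceq^{\mathrm{cod}}$-generalization for $(q,E)$ is a CQ $q'$ fitting $E$ with $q\subseteq q'$ such that no CQ $q''$ fitting $E$ with $q\subseteq q''$ has $q''\prec^{\mathrm{cod}}_q q'$. Candidate CQs use only relation symbols occurring in the input. *)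

theory Defs
  imports Main
begin

(* Relation symbols have type 'r; a fact / atom is a pair (R, argument list).
   Values of instances and variables of queries are both natural numbers
   (a countably infinite domain). *)

type_synonym 'r fact = "'r \<times> nat list"
type_synonym 'r inst = "'r fact set"
type_synonym 'r data_example = "'r inst \<times> nat list"

definition adom :: "'r inst \<Rightarrow> nat set" where
  "adom I = (\<Union>(R, xs)\<in>I. set xs)"

definition data_example :: "nat \<Rightarrow> 'r data_example \<Rightarrow> bool" where
  "data_example k e \<longleftrightarrow> finite (fst e) \<and> length (snd e) = k \<and> set (snd e) \<subseteq> adom (fst e)"

datatype 'r cq = CQ (ans: "nat list") (atoms: "'r fact set")

definition wf_cq :: "'r cq \<Rightarrow> bool" where
  "wf_cq q \<longleftrightarrow> finite (atoms q) \<and> (\<forall>x\<in>set (ans q). \<exists>(R, xs)\<in>atoms q. x \<in> set xs)"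

definition arity :: "'r cq \<Rightarrow> nat" where
  "arity q = length (ans q)"

definition rels :: "'r inst \<Rightarrow> 'r set" where
  "rels I = fst ` I"

definition answers :: "'r cq \<Rightarrow> 'r inst \<Rightarrow> nat list set" where
  "answers q I = {a. \<exists>h :: nat \<Rightarrow> nat.
      (\<forall>(R, xs)\<in>atoms q. (R, map h xs) \<in> I) \<and> map h (ans q) = a}"

definition sem :: "'r cq \<Rightarrow> 'r data_example set" where
  "sem q = {(I, a). finite I \<and> length a = arity q \<and> set a \<subseteq> adom I \<and> a \<in> answers q I}"

definition contained :: "'r cq \<Rightarrow> 'r cq \<Rightarrow> bool" where
  "contained q1 q2 \<longleftrightarrow> sem q1 \<subseteq> sem q2"

definition canonical :: "'r cq \<Rightarrow> 'r data_example" where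
  "canonical q = (atoms q, ans q)"

definition fits :: "'r cq \<Rightarrow> 'r data_example set \<Rightarrow> 'r data_example set \<Rightarrow> bool" where
  "fits q Ep En \<longleftrightarrow> Ep \<subseteq> sem q \<and> En \<inter> sem q = {}"

definition symdiff :: "'a set \<Rightarrow> 'a set \<Rightarrow> 'a set" where
  "symdiff A B = (A - B) \<union> (B - A)"

definition cod_le :: "'r cq \<Rightarrow> 'r cq \<Rightarrow> 'r cq \<Rightarrow> bool" where
  "cod_le q q1 q2 \<longleftrightarrow> symdiff (sem q) (sem q1) \<subseteq> symdiff (sem q) (sem q2)"

definition cod_less :: "'r cq \<Rightarrow> 'r cq \<Rightarrow> 'r cq \<Rightarrow> bool" where
  "cod_less q q1 q2 \<longleftrightarrow> cod_le q q1 q2 \<and> \<not> cod_le q q2 q1"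

definition annotated :: "'r cq \<Rightarrow> 'r data_example set \<Rightarrow> 'r data_example set \<Rightarrow> bool" where
  "annotated q Ep En \<longleftrightarrow> wf_cq q \<and> finite Ep \<and> finite En \<and>
     (\<forall>e\<in>Ep \<union> En. data_example (arity q) e)"

definition input_sig :: "'r cq \<Rightarrow> 'r data_example set \<Rightarrow> 'r data_example set \<Rightarrow> 'r set" where
  "input_sig q Ep En = rels (atoms q) \<union> (\<Union>e\<in>Ep \<union> En. rels (fst e))"

definition candidate :: "'r cq \<Rightarrow> 'r data_example set \<Rightarrow> 'r data_example set \<Rightarrow> 'r cq \<Rightarrow> bool" where
  "candidate q Ep En q' \<longleftrightarrow> wf_cq q' \<and> arity q' = arity q \<and> rels (atoms q') \<subseteq> input_sig q Ep En"

definition cod_repair :: "'r cq \<Rightarrow> 'r data_example set \<Rightarrow> 'r data_example set \<Rightarrow> 'r cq \<Rightarrow> bool" where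
  "cod_repair q Ep En q' \<longleftrightarrow> candidate q Ep En q' \<and> fits q' Ep En \<and>
     \<not> (\<exists>q''. candidate q Ep En q'' \<and> fits q'' Ep En \<and> cod_less q q'' q')"

definition cod_generalization :: "'r cq \<Rightarrow> 'r data_example set \<Rightarrow> 'r data_example set \<Rightarrow> 'r cq \<Rightarrow> bool" where
  "cod_generalization q Ep En q' \<longleftrightarrow> candidate q Ep En q' \<and> fits q' Ep En \<and> contained q q' \<and>
     \<not> (\<exists>q''. candidate q Ep En q'' \<and> fits q'' Ep En \<and> contained q q'' \<and> cod_less q q'' q')"

end

theory Submission
  imports Defs
begin

(* Proof idea: by the homomorphism (Chandra-Merlin) theorem, q is contained in a CQ q' of the
   same arity iff q' returns the answer tuple of q on the canonical instance of q, i.e. iff q'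
   fits the canonical example e_q as a positive example. Adding e_q to the positive examples
   does not change the signature of the input, since e_q uses only relation symbols of q.
   Hence "candidate fitting (E+ \<union> {e_q}, E-)" and "candidate fitting (E+, E-) and containing q"
   describe the same set of CQs, so generalizations and repairs minimise the same order over
   the same set. *)

lemma canonical_in_sem:
  assumes "wf_cq q"
  shows "canonical q \<in> sem q"
proof -
  have "set (ans q) \<subseteq> adom (atoms q)"
    using assms unfolding wf_cq_def adom_def by fastforce
  moreover have "ans q \<in> answers q (atoms q)"
    unfolding answers_def by (rule CollectI, rule exI[of _ id]) auto
  ultimately show ?thesis
    using assms unfolding canonical_def sem_def wf_cq_def arity_def by auto
qed

lemma answers_subset_if_answer_on_canonical:
  assumes "ans q \<in> answers q' (atoms q)"
  shows "answers q I \<subseteq> answers q' I"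
proof
  fix a assume "a \<in> answers q I"
  then obtain g where g: "\<forall>(R, xs)\<in>atoms q. (R, map g xs) \<in> I" "map g (ans q) = a"
    unfolding answers_def by blast
  obtain h where h: "\<forall>(R, xs)\<in>atoms q'. (R, map h xs) \<in> atoms q" "map h (ans q') = ans q"
    using assms unfolding answers_def by blast
  have "\<forall>(R, xs)\<in>atoms q'. (R, map (g \<circ> h) xs) \<in> I"
    using h(1) g(1) by fastforce
  moreover have "map (g \<circ> h) (ans q') = a"
    using h(2) g(2) by (metis map_map)
  ultimately show "a \<in> answers q' I"
    unfolding answers_def by blast
qed

lemma contained_iff_canonical_in_sem:
  assumes "wf_cq q" and "arity q' = arity q"
  shows "contained q q' \<longleftrightarrow> canonical q \<in> sem q'"
proof
  assume "contained q q'"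
  then show "canonical q \<in> sem q'"
    using canonical_in_sem[OF assms(1)] unfolding contained_def by auto
next
  assume "canonical q \<in> sem q'"
  then have "answers q I \<subseteq> answers q' I" for I
    by (intro answers_subset_if_answer_on_canonical) (simp add: canonical_def sem_def)
  then show "contained q q'"
    using assms(2) unfolding contained_def sem_def by auto
qed

lemma candidate_insert_canonical:
  "candidate q (insert (canonical q) Ep) En = candidate q Ep En"
proof -
  have "input_sig q (insert (canonical q) Ep) En = input_sig q Ep En"
    unfolding input_sig_def canonical_def by auto
  then show ?thesis
    unfolding candidate_def by simp
qed

lemma fits_insert_canonical_iff:
  assumes "wf_cq q" and "candidate q Ep En q'"
  shows "fits q' (insert (canonical q) Ep) En \<longleftrightarrow> fits q' Ep En \<and> contained q q'"
  using assms contained_iff_canonical_in_sem[OF assms(1), of q']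
  unfolding candidate_def fits_def by auto

theorem proposition26:
  fixes q :: "'r cq" and Ep En :: "'r data_example set"
  assumes "annotated q Ep En"
  shows "{q'. cod_generalization q Ep En q'} = {q'. cod_repair q (insert (canonical q) Ep) En q'}"
proof -
  have "wf_cq q"
    using assms unfolding annotated_def by simp
  then have "candidate q Ep En p \<Longrightarrow>
      fits p (insert (canonical q) Ep) En \<longleftrightarrow> fits p Ep En \<and> contained q p" for p
    by (rule fits_insert_canonical_iff)
  then show ?thesis
    unfolding cod_generalization_def cod_repair_def candidate_insert_canonical by blast
qed

end
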